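(* There is a universal constant $C\geq1$ such that the following holds. Let $s\in\mathbb{N}$ and let $T$ be the set of all 1-Lipschitz functions $f:\mathbb{R}^{s}\to\mathbb{R}$ with $f(0)=0$. For $0<\delta\leq1$ define on $T$ the norm \[\|f\|_{(\delta)}=\sup_{x\in\mathbb{R}^{s}}\frac{|f(x)|}{\|x\|_{2}^{1+\delta}+1}.\] Then for all $\epsilon>0$ and $0<\delta\leq 1$, \[\log N(T,\|\cdot\|_{(\delta)},\epsilon)\leq\left(\frac{C\sqrt{s}}{\epsilon}\right)^{s}\frac{1}{\delta}.\]
   Context: 1-Lipschitz means $|f(x)-f(y)|\leq\|x-y\|_{2}$ for the Euclidean norm. For a metric space $(T,\rho)$, the covering number $N(T,\rho,\epsilon)$ is the smallest size of $S\subset T$ such that every element of $T$ is within distance $\epsilon$ of some element of $S$ (here $\rho(f,h)=\|f-h\|_{(\delta)}$). *)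

theory Defs
  imports "HOL-Analysis.Analysis" "HOL-Library.Extended_Nat"
begin

text \<open>R^s is represented by functions nat \<Rightarrow> real vanishing at indices \<ge> s.\<close>
definition Rs :: "nat \<Rightarrow> (nat \<Rightarrow> real) set" where
  "Rs s = {x. \<forall>i\<ge>s. x i = 0}"

definition enorm :: "nat \<Rightarrow> (nat \<Rightarrow> real) \<Rightarrow> real" where
  "enorm s x = L2_set x {..<s}"

definition LipT :: "nat \<Rightarrow> ((nat \<Rightarrow> real) \<Rightarrow> real) set" where
  "LipT s = {f. (\<forall>x\<in>Rs s. \<forall>y\<in>Rs s. \<bar>f x - f y\<bar> \<le> enorm s (\<lambda>i. x i - y i))
               \<and> f (\<lambda>_. 0) = 0 \<and> (\<forall>x. x \<notin> Rs s \<longrightarrow> f x = 0)}"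

definition delta_dist :: "nat \<Rightarrow> real \<Rightarrow> ((nat \<Rightarrow> real) \<Rightarrow> real) \<Rightarrow> ((nat \<Rightarrow> real) \<Rightarrow> real) \<Rightarrow> real" where
  "delta_dist s \<delta> f h = (SUP x\<in>Rs s. \<bar>f x - h x\<bar> / (enorm s x powr (1 + \<delta>) + 1))"

definition covering_number :: "'a set \<Rightarrow> ('a \<Rightarrow> 'a \<Rightarrow> real) \<Rightarrow> real \<Rightarrow> enat" where
  "covering_number T \<rho> \<epsilon> =
     (INF S\<in>{S. S \<subseteq> T \<and> (\<forall>t\<in>T. \<exists>u\<in>S. \<rho> t u \<le> \<epsilon>)}.
        if finite S then enat (card S) else \<infinity>)"

end

theory Submission
  imports Defs
begin

(* Cover the ball of radius 2^M, where (2^M)^\<delta> is about 2/\<epsilon>, by dyadic scales: at scale k the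
   cube [-2^k, 2^k]^s carries a grid of mesh h_k = \<epsilon> 2^(k(1+\<delta>)) / (8 sqrt s). A 1-Lipschitz f is
   encoded by the integer parts of f/h_k at all grid points. Two functions with the same code are
   \<epsilon>-close for the weighted norm: inside the ball by comparing at the nearest grid point of the
   smallest scale containing x, outside it because |f x - g x| \<le> 2|x|. Neighbouring grid points
   are h_k apart, so along the steps towards the origin the code changes by -1, 0 or 1 only; hence
   there are at most 3^#nodes codes, and #nodes is a geometric sum of order (C sqrt s/\<epsilon>)^s / \<delta>. *)

lemma covering_number_le_card:
  assumes "S \<subseteq> T" "finite S" "\<And>t. t \<in> T \<Longrightarrow> \<exists>u\<in>S. \<rho> t u \<le> \<epsilon>"
  shows "covering_number T \<rho> \<epsilon> \<le> enat (card S)"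
  unfolding covering_number_def by (rule INF_lower2[of S]) (use assms in auto)

lemma covering_number_le_card_image:
  assumes "finite (code ` T)"
    and close: "\<And>t u. t \<in> T \<Longrightarrow> u \<in> T \<Longrightarrow> code t = code u \<Longrightarrow> \<rho> t u \<le> \<epsilon>"
  shows "covering_number T \<rho> \<epsilon> \<le> enat (card (code ` T))"
proof -
  define rep where "rep c = (SOME t. t \<in> T \<and> code t = c)" for c
  have rep: "rep (code t) \<in> T \<and> code (rep (code t)) = code t" if "t \<in> T" for t
    unfolding rep_def by (rule someI_ex) (use that in blast)
  let ?S = "rep ` code ` T"
  have "\<rho> t (rep (code t)) \<le> \<epsilon>" if "t \<in> T" for t
    using close[OF that] rep[OF that] by simp
  then have "covering_number T \<rho> \<epsilon> \<le> enat (card ?S)"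
    using rep assms(1) by (intro covering_number_le_card) auto
  also have "\<dots> \<le> enat (card (code ` T))"
    using assms(1) by (simp add: card_image_le)
  finally show ?thesis .
qed

lemma ln_the_enat_le:
  assumes "N \<le> enat n" "1 \<le> n"
  shows "N \<noteq> \<infinity>" "ln (real (the_enat N)) \<le> ln (real n)"
proof -
  obtain m where "N = enat m" "m \<le> n" using assms(1) by (metis enat_ile enat_ord_simps(1))
  then show "N \<noteq> \<infinity>" by simp
  show "ln (real (the_enat N)) \<le> ln (real n)"
    using \<open>N = enat m\<close> \<open>m \<le> n\<close> assms(2) by (cases "m = 0") (auto simp: ln_le_cancel_iff)
qed

lemma eq_on_forest_if_increments_eq:
  fixes c c' :: "'a \<Rightarrow> 'b::group_add" and parent :: "'a \<Rightarrow> 'a" and \<mu> :: "'a \<Rightarrow> nat"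
  assumes parent: "\<And>q. q \<in> P \<Longrightarrow> \<not> is_root q \<Longrightarrow> parent q \<in> P \<and> \<mu> (parent q) < \<mu> q"
    and roots: "\<And>q. q \<in> P \<Longrightarrow> is_root q \<Longrightarrow> c q = c' q"
    and increments: "\<And>q. q \<in> P \<Longrightarrow> \<not> is_root q \<Longrightarrow> c q - c (parent q) = c' q - c' (parent q)"
    and "q \<in> P"
  shows "c q = c' q"
  using \<open>q \<in> P\<close>
proof (induction q rule: measure_induct_rule[of \<mu>])
  case (less q)
  show ?case
  proof (cases "is_root q")
    case True
    then show ?thesis by (rule roots[OF less.prems])
  next
    case False
    then have "parent q \<in> P" "\<mu> (parent q) < \<mu> q" using parent[OF less.prems] by auto
    then have "c (parent q) = c' (parent q)" by (intro less.IH)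
    moreover have "c q - c (parent q) = c' q - c' (parent q)" by (rule increments[OF less.prems False])
    ultimately show ?thesis by (metis diff_add_cancel)
  qed
qed

lemma card_functions_with_increments_le:
  fixes C :: "('a \<Rightarrow> 'b::group_add) set" and parent :: "'a \<Rightarrow> 'a" and \<mu> :: "'a \<Rightarrow> nat"
  assumes "finite P" "finite A"
    and parent: "\<And>q. q \<in> P \<Longrightarrow> \<not> is_root q \<Longrightarrow> parent q \<in> P \<and> \<mu> (parent q) < \<mu> q"
    and outside: "\<And>c q. c \<in> C \<Longrightarrow> q \<notin> P \<Longrightarrow> c q = 0"
    and roots: "\<And>c q. c \<in> C \<Longrightarrow> q \<in> P \<Longrightarrow> is_root q \<Longrightarrow> c q \<in> A"
    and increments: "\<And>c q. c \<in> C \<Longrightarrow> q \<in> P \<Longrightarrow> \<not> is_root q \<Longrightarrow> c q - c (parent q) \<in> A"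
  shows "finite C" "card C \<le> card A ^ card P"
proof -
  define incr where
    "incr c = restrict (\<lambda>q. if is_root q then c q else c q - c (parent q)) P" for c :: "'a \<Rightarrow> 'b"
  have "inj_on incr C"
  proof (rule inj_onI)
    fix c c' assume c: "c \<in> C" "c' \<in> C" and "incr c = incr c'"
    have same: "(if is_root q then c q else c q - c (parent q))
        = (if is_root q then c' q else c' q - c' (parent q))" if "q \<in> P" for q
    proof -
      have "incr c q = incr c' q" by (simp add: \<open>incr c = incr c'\<close>)
      then show ?thesis using that by (simp add: incr_def)
    qed
    show "c = c'"
    proof
      fix q show "c q = c' q"
      proof (cases "q \<in> P")
        case True
        show ?thesis
        proof (rule eq_on_forest_if_increments_eq[OF parent _ _ True])
          fix q assume "q \<in> P" "is_root q"
          then show "c q = c' q" using same[of q] by simp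
        next
          fix q assume "q \<in> P" "\<not> is_root q"
          then show "c q - c (parent q) = c' q - c' (parent q)" using same[of q] by simp
        qed
      qed (simp add: outside c)
    qed
  qed
  moreover have "incr ` C \<subseteq> P \<rightarrow>\<^sub>E A"
    using roots increments by (auto simp: incr_def)
  moreover have "finite (P \<rightarrow>\<^sub>E A)" "card (P \<rightarrow>\<^sub>E A) = card A ^ card P"
    using assms(1,2) by (simp_all add: finite_PiE card_funcsetE)
  ultimately show "finite C" "card C \<le> card A ^ card P"
    by (metis finite_subset finite_imageD, metis card_image card_mono)
qed

(* The parent map of a spanning tree of the integer grid rooted at the origin. *)
definition step_to_origin :: "nat \<Rightarrow> (nat \<Rightarrow> int) \<Rightarrow> nat \<Rightarrow> int" where
  "step_to_origin s i = (let j = LEAST j. j < s \<and> i j \<noteq> 0 in i(j := i j - sgn (i j)))"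

lemma step_to_origin_eq:
  assumes "\<exists>j<s. i j \<noteq> 0"
  obtains j where "j < s" "i j \<noteq> 0" "step_to_origin s i = i(j := i j - sgn (i j))"
proof -
  let ?j = "LEAST j. j < s \<and> i j \<noteq> 0"
  have "?j < s \<and> i ?j \<noteq> 0" using assms by (rule LeastI_ex)
  then show ?thesis by (intro that[of ?j]) (simp_all add: step_to_origin_def Let_def)
qed

lemma step_to_origin_in_box:
  assumes "i \<in> {..<s} \<rightarrow>\<^sub>E {-n..n}" "\<exists>j<s. i j \<noteq> 0"
  shows "step_to_origin s i \<in> {..<s} \<rightarrow>\<^sub>E {-n..n}"
proof -
  obtain j where j: "j < s" "i j \<noteq> 0" "step_to_origin s i = i(j := i j - sgn (i j))"
    using assms(2) by (rule step_to_origin_eq)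
  have "i j \<in> {-n..n}" using PiE_mem[OF assms(1)] j(1) by blast
  then have "i j - sgn (i j) \<in> {-n..n}" using j(2) by (cases "0 < i j") (simp_all add: sgn_if)
  from PiE_fun_upd[OF this assms(1)] have "i(j := i j - sgn (i j)) \<in> insert j {..<s} \<rightarrow>\<^sub>E {-n..n}" .
  moreover have "insert j {..<s} = {..<s}" using j(1) by blast
  ultimately show ?thesis using j(3) by simp
qed

lemma step_to_origin_decreases_l1:
  assumes "\<exists>j<s. i j \<noteq> 0"
  shows "(\<Sum>j<s. nat \<bar>step_to_origin s i j\<bar>) < (\<Sum>j<s. nat \<bar>i j\<bar>)"
proof -
  obtain j where j: "j < s" "i j \<noteq> 0" "step_to_origin s i = i(j := i j - sgn (i j))"
    using assms by (rule step_to_origin_eq)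
  let ?i' = "step_to_origin s i"
  have less: "nat \<bar>?i' j\<bar> < nat \<bar>i j\<bar>" using j(2,3) by (auto simp: sgn_if)
  then have "nat \<bar>?i' j'\<bar> \<le> nat \<bar>i j'\<bar>" for j' using j(3) by (cases "j' = j") auto
  then show ?thesis using j(1) less by (intro sum_strict_mono_ex1) auto
qed

lemma step_to_origin_dist_le:
  fixes h :: real
  assumes "\<exists>j<s. i j \<noteq> 0" "0 \<le> h"
  shows "L2_set (\<lambda>j. h * of_int (i j - step_to_origin s i j)) {..<s} \<le> h"
proof -
  obtain j where j: "j < s" "i j \<noteq> 0" "step_to_origin s i = i(j := i j - sgn (i j))"
    using assms(1) by (rule step_to_origin_eq)
  have "\<bar>h * of_int (i j' - step_to_origin s i j')\<bar> = (if j' = j then h else 0)" for j'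
    using j(2,3) assms(2) by (auto simp: sgn_if abs_mult)
  then have "(\<Sum>j'<s. \<bar>h * of_int (i j' - step_to_origin s i j')\<bar>) = h"
    using j(1) by simp
  with L2_set_le_sum_abs show ?thesis by (rule ord_le_eq_trans)
qed

lemma enorm_nonneg: "0 \<le> enorm s x"
  unfolding enorm_def by (rule L2_set_nonneg)

lemma enorm_abs: "enorm s (\<lambda>j. \<bar>x j\<bar>) = enorm s x"
  by (simp add: enorm_def L2_set_def)

lemma abs_coordinate_le_enorm:
  assumes "j < s"
  shows "\<bar>x j\<bar> \<le> enorm s x"
proof -
  have "\<bar>x j\<bar> \<le> enorm s (\<lambda>j. \<bar>x j\<bar>)"
    unfolding enorm_def by (rule member_le_L2_set) (use assms in auto)
  then show ?thesis by (simp only: enorm_abs)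
qed

lemma enorm_le_sqrt_dim_mult:
  assumes "\<And>j. j < s \<Longrightarrow> \<bar>x j\<bar> \<le> c"
  shows "enorm s x \<le> sqrt (real s) * \<bar>c\<bar>"
proof -
  have "enorm s (\<lambda>j. \<bar>x j\<bar>) \<le> L2_set (\<lambda>_. c) {..<s}"
    unfolding enorm_def using assms by (intro L2_set_mono) auto
  then show ?thesis by (simp only: enorm_abs L2_set_constant card_lessThan)
qed

lemma zero_in_Rs: "(\<lambda>_. 0) \<in> Rs s"
  by (simp add: Rs_def)

lemma zero_in_LipT: "(\<lambda>_. 0) \<in> LipT s"
  by (simp add: LipT_def enorm_nonneg)

lemma LipT_dist_le:
  "f \<in> LipT s \<Longrightarrow> x \<in> Rs s \<Longrightarrow> y \<in> Rs s \<Longrightarrow> \<bar>f x - f y\<bar> \<le> enorm s (\<lambda>j. x j - y j)"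
  unfolding LipT_def by blast

lemma LipT_abs_le_enorm:
  assumes "f \<in> LipT s" "x \<in> Rs s"
  shows "\<bar>f x\<bar> \<le> enorm s x"
  using LipT_dist_le[OF assms zero_in_Rs] assms(1) by (simp add: LipT_def)

lemma delta_dist_le:
  assumes "\<And>x. x \<in> Rs s \<Longrightarrow> \<bar>f x - g x\<bar> \<le> \<epsilon> * (enorm s x powr (1 + \<delta>) + 1)"
  shows "delta_dist s \<delta> f g \<le> \<epsilon>"
  unfolding delta_dist_def
proof (rule cSUP_least)
  fix x assume "x \<in> Rs s"
  moreover have "0 < enorm s x powr (1 + \<delta>) + 1"
    by (simp add: add_nonneg_pos)
  ultimately show "\<bar>f x - g x\<bar> / (enorm s x powr (1 + \<delta>) + 1) \<le> \<epsilon>"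
    using assms by (simp add: divide_le_eq)
qed (use zero_in_Rs in blast)

lemma le_powr_one_plus_add_one:
  fixes e a :: real
  assumes "0 \<le> e" "0 \<le> a"
  shows "e \<le> e powr (1 + a) + 1"
proof (cases "e \<le> 1")
  case False
  then have "e powr 1 \<le> e powr (1 + a)" using assms(2) by (intro powr_mono) auto
  then show ?thesis using False by simp
qed (simp add: add_increasing)

lemma covering_number_LipT_le_one:
  assumes "0 < \<epsilon>" "0 \<le> \<delta>" "1 \<le> \<epsilon> \<or> s = 0"
  shows "covering_number (LipT s) (delta_dist s \<delta>) \<epsilon> \<le> enat 1"
proof -
  have "delta_dist s \<delta> f (\<lambda>_. 0) \<le> \<epsilon>" if f: "f \<in> LipT s" for f
  proof (rule delta_dist_le)
    fix x assume x: "x \<in> Rs s"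
    have "\<bar>f x\<bar> \<le> enorm s x" by (rule LipT_abs_le_enorm[OF f x])
    also have "\<dots> \<le> \<epsilon> * (enorm s x powr (1 + \<delta>) + 1)"
    proof (cases "s = 0")
      case False
      then have "1 \<le> \<epsilon>" using assms(3) by simp
      moreover have "enorm s x \<le> enorm s x powr (1 + \<delta>) + 1"
        using assms(2) by (intro le_powr_one_plus_add_one enorm_nonneg)
      moreover have "0 \<le> enorm s x powr (1 + \<delta>) + 1" by (simp add: add_increasing)
      ultimately show ?thesis using mult_right_mono[of 1 \<epsilon>] by fastforce
    qed (use assms(1) in \<open>simp add: enorm_def\<close>)
    finally show "\<bar>f x - 0\<bar> \<le> \<epsilon> * (enorm s x powr (1 + \<delta>) + 1)" by simp
  qed
  then show ?thesis
    using covering_number_le_card[of "{\<lambda>_. 0}" "LipT s" "delta_dist s \<delta>" \<epsilon>] zero_in_LipT by auto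
qed

lemma floor_divide_diff_mem:
  fixes a b h :: real
  assumes "0 < h" "\<bar>a - b\<bar> \<le> h"
  shows "\<lfloor>a / h\<rfloor> - \<lfloor>b / h\<rfloor> \<in> {-1, 0, 1}"
proof -
  have "\<bar>a / h - b / h\<bar> \<le> 1"
    using assms by (simp add: diff_divide_distrib[symmetric] abs_divide)
  then have "\<lfloor>a / h\<rfloor> \<le> \<lfloor>b / h + 1\<rfloor>" "\<lfloor>b / h\<rfloor> \<le> \<lfloor>a / h + 1\<rfloor>"
    by (intro floor_mono, linarith)+
  then show ?thesis by auto
qed

lemma dist_less_if_floor_divide_eq:
  fixes a b h :: real
  assumes "0 < h" "\<lfloor>a / h\<rfloor> = \<lfloor>b / h\<rfloor>"
  shows "\<bar>a - b\<bar> < h"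
proof -
  have "\<bar>a / h - b / h\<bar> < 1" using assms(2) by linarith
  then show ?thesis
    using assms(1) by (simp add: diff_divide_distrib[symmetric] abs_divide)
qed

lemma exists_dyadic_scale:
  fixes e :: real
  assumes "0 \<le> e" "e \<le> 2 ^ M"
  obtains k where "k \<le> M" "e \<le> 2 ^ k" "2 ^ k \<le> max 1 (2 * e)"
proof -
  define k where "k = (LEAST k. e \<le> 2 ^ k)"
  have "k \<le> M" unfolding k_def by (rule Least_le) (rule assms(2))
  moreover have "e \<le> 2 ^ k" unfolding k_def by (rule LeastI[of _ M]) (rule assms(2))
  moreover have "2 ^ k \<le> max 1 (2 * e)"
  proof (cases k)
    case (Suc k')
    then have "k' < (LEAST k. e \<le> 2 ^ k)" by (simp add: k_def)
    then have "\<not> e \<le> 2 ^ k'" by (rule not_less_Least)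
    then show ?thesis using Suc by simp
  qed simp
  ultimately show ?thesis by (rule that)
qed

lemma max_one_double_powr_le:
  fixes e a :: real
  assumes "0 \<le> e" "0 \<le> a" "a \<le> 1"
  shows "max 1 (2 * e) powr (1 + a) \<le> 4 * (e powr (1 + a) + 1)"
proof (cases "2 * e \<le> 1")
  case False
  have "(2::real) powr (1 + a) \<le> 2 powr 2" using assms(3) by (intro powr_mono) auto
  then have "(2 * e) powr (1 + a) \<le> 4 * e powr (1 + a)"
    using assms(1) by (simp add: powr_mult mult_right_mono)
  then show ?thesis using False by simp
qed (simp add: add_increasing)

lemma sum_powers_inverse_two_powr_le:
  fixes \<delta> :: real
  assumes "0 < \<delta>" "\<delta> \<le> 1"
  shows "(\<Sum>k\<le>M. inverse (2 powr \<delta>) ^ k) \<le> 4 / \<delta>"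
proof -
  define r where "r = inverse (2 powr \<delta>)"
  have "1 + \<delta> * ln 2 \<le> exp (\<delta> * ln 2)" by (rule exp_ge_add_one_self)
  moreover have "\<delta> / 2 \<le> \<delta> * ln 2" using ln2_ge_two_thirds assms(1) by simp
  moreover have "exp (\<delta> * ln 2) = 2 powr \<delta>" by (simp add: powr_def mult.commute)
  ultimately have lower: "1 + \<delta> / 2 \<le> 2 powr \<delta>" by linarith
  have upper: "2 powr \<delta> \<le> 2" using powr_mono[of \<delta> 1 2] assms(2) by simp
  have "1 < 2 powr \<delta>" using lower assms(1) by linarith
  then have r: "0 \<le> r" "r < 1" by (simp_all add: r_def inverse_less_1_iff)
  have "\<delta> / 4 \<le> 1 - r"
  proof -
    have "\<delta> / 2 / 2 \<le> (2 powr \<delta> - 1) / 2 powr \<delta>"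
      using lower upper assms(1) by (intro frac_le) auto
    also have "\<dots> = 1 - r" using lower assms(1) by (simp add: r_def field_simps)
    finally show ?thesis by simp
  qed
  have "(\<Sum>k\<le>M. r ^ k) = (\<Sum>k<Suc M. r ^ k)" by (simp only: lessThan_Suc_atMost)
  also have "\<dots> = (1 - r ^ Suc M) / (1 - r)" using r by (simp only: sum_gp_strict) simp
  also have "\<dots> \<le> 1 / (1 - r)" using r by (intro divide_right_mono) auto
  also have "\<dots> \<le> 1 / (\<delta> / 4)" using \<open>\<delta> / 4 \<le> 1 - r\<close> assms(1) by (intro divide_left_mono) auto
  finally show ?thesis by (simp add: r_def)
qed

lemma exists_depth:
  fixes \<epsilon> \<delta> :: real
  assumes "0 < \<epsilon>" "\<epsilon> < 1" "0 < \<delta>" "\<delta> \<le> 1"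
  obtains M :: nat where "2 / \<epsilon> \<le> (2 ^ M) powr \<delta>" "(2 ^ M) powr \<delta> \<le> 4 / \<epsilon>"
proof -
  define L where "L = log 2 (2 / \<epsilon>)"
  have "0 < L" "2 powr L = 2 / \<epsilon>" using assms(1,2) by (simp_all add: L_def)
  define M where "M = nat \<lceil>L / \<delta>\<rceil>"
  have "real M = of_int \<lceil>L / \<delta>\<rceil>"
    using \<open>0 < L\<close> assms(3) by (simp add: M_def)
  then have "L / \<delta> \<le> real M" "real M < L / \<delta> + 1" by linarith+
  then have "L \<le> real M * \<delta>" "real M * \<delta> \<le> L + 1"
    using assms(3,4) by (simp_all add: field_simps)
  moreover have "(2 ^ M) powr \<delta> = 2 powr (real M * \<delta>)"
    by (simp add: powr_realpow[symmetric] powr_powr)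
  ultimately have "2 powr L \<le> (2 ^ M) powr \<delta>" "(2 ^ M) powr \<delta> \<le> 2 powr (L + 1)"
    by (simp_all add: powr_mono)
  then show ?thesis using \<open>2 powr L = 2 / \<epsilon>\<close> by (intro that) (simp_all add: powr_add)
qed

locale dyadic_net =
  fixes s :: nat and \<epsilon> \<delta> :: real and M :: nat
  assumes dim_pos: "0 < s" and eps_pos: "0 < \<epsilon>" and delta_pos: "0 < \<delta>" and delta_le_1: "\<delta> \<le> 1"
    and depth_lower: "2 / \<epsilon> \<le> (2 ^ M) powr \<delta>" and depth_upper: "(2 ^ M) powr \<delta> \<le> 4 / \<epsilon>"
begin

definition mesh :: "nat \<Rightarrow> real" where
  "mesh k = \<epsilon> * (2 ^ k) powr (1 + \<delta>) / (8 * sqrt (real s))"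

definition radius :: "nat \<Rightarrow> int" where
  "radius k = \<lceil>2 ^ k / mesh k\<rceil>"

definition grid :: "nat \<Rightarrow> (nat \<Rightarrow> int) set" where
  "grid k = {..<s} \<rightarrow>\<^sub>E {- radius k..radius k}"

definition nodes :: "(nat \<times> (nat \<Rightarrow> int)) set" where
  "nodes = (SIGMA k:{..M}. grid k)"

definition node_point :: "nat \<Rightarrow> (nat \<Rightarrow> int) \<Rightarrow> nat \<Rightarrow> real" where
  "node_point k i j = (if j < s then mesh k * of_int (i j) else 0)"

definition code :: "((nat \<Rightarrow> real) \<Rightarrow> real) \<Rightarrow> nat \<times> (nat \<Rightarrow> int) \<Rightarrow> int" where
  "code f = (\<lambda>(k, i). if (k, i) \<in> nodes then \<lfloor>f (node_point k i) / mesh k\<rfloor> else 0)"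

lemma one_le_sqrt_dim: "1 \<le> sqrt (real s)"
  using dim_pos by simp

lemma mesh_pos: "0 < mesh k"
  using eps_pos dim_pos by (simp add: mesh_def)

lemma node_point_in_Rs: "node_point k i \<in> Rs s"
  by (simp add: node_point_def Rs_def)

lemma finite_nodes: "finite nodes"
  unfolding nodes_def grid_def by (intro finite_SigmaI finite_PiE) auto

lemma step_to_origin_in_nodes:
  assumes "(k, i) \<in> nodes" "\<exists>j<s. i j \<noteq> 0"
  shows "(k, step_to_origin s i) \<in> nodes"
  using assms step_to_origin_in_box[OF _ assms(2)] by (simp add: nodes_def grid_def)

lemma code_increment:
  assumes f: "f \<in> LipT s" and node: "(k, i) \<in> nodes" and nonzero: "\<exists>j<s. i j \<noteq> 0"
  shows "code f (k, i) - code f (k, step_to_origin s i) \<in> {-1, 0, 1}"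
proof -
  let ?i' = "step_to_origin s i"
  have node': "(k, ?i') \<in> nodes" using node nonzero by (rule step_to_origin_in_nodes)
  have "enorm s (\<lambda>j. node_point k i j - node_point k ?i' j)
      = L2_set (\<lambda>j. mesh k * of_int (i j - ?i' j)) {..<s}"
    unfolding enorm_def by (rule L2_set_cong) (simp_all add: node_point_def algebra_simps)
  also have "\<dots> \<le> mesh k"
    using nonzero mesh_pos[of k] by (intro step_to_origin_dist_le) auto
  finally have "\<bar>f (node_point k i) - f (node_point k ?i')\<bar> \<le> mesh k"
    using LipT_dist_le[OF f node_point_in_Rs[of k i] node_point_in_Rs[of k ?i']] by linarith
  then show ?thesis
    using floor_divide_diff_mem[OF mesh_pos] node node' by (simp add: code_def)
qed

lemma code_at_origin:
  assumes "f \<in> LipT s" "\<forall>j<s. i j = 0"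
  shows "code f (k, i) = 0"
proof -
  have "node_point k i = (\<lambda>_. 0)" using assms(2) by (auto simp: node_point_def)
  then show ?thesis using assms(1) by (simp add: code_def LipT_def)
qed

lemma finite_codes: "finite (code ` LipT s)"
  and card_codes_le: "card (code ` LipT s) \<le> 3 ^ card nodes"
proof -
  define is_root where "is_root q \<longleftrightarrow> (\<forall>j<s. snd q j = 0)" for q :: "nat \<times> (nat \<Rightarrow> int)"
  define parent where "parent q = (fst q, step_to_origin s (snd q))" for q :: "nat \<times> (nat \<Rightarrow> int)"
  define \<mu> where "\<mu> q = (\<Sum>j<s. nat \<bar>snd q j\<bar>)" for q :: "nat \<times> (nat \<Rightarrow> int)"
  have parent: "parent q \<in> nodes \<and> \<mu> (parent q) < \<mu> q" if "q \<in> nodes" "\<not> is_root q" for q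
  proof -
    obtain k i where q: "q = (k, i)" by fastforce
    have nonzero: "\<exists>j<s. i j \<noteq> 0" using that(2) q by (simp add: is_root_def)
    show ?thesis
      using step_to_origin_in_nodes[OF _ nonzero] step_to_origin_decreases_l1[OF nonzero] that(1)
      by (simp add: q parent_def \<mu>_def)
  qed
  have outside: "c q = 0" if "c \<in> code ` LipT s" "q \<notin> nodes" for c q
    using that by (cases q) (auto simp: code_def)
  have roots: "c q \<in> {-1, 0, 1}" if "c \<in> code ` LipT s" "q \<in> nodes" "is_root q" for c q
    using that code_at_origin by (cases q) (auto simp: is_root_def)
  have increments: "c q - c (parent q) \<in> {-1, 0, 1}"
    if "c \<in> code ` LipT s" "q \<in> nodes" "\<not> is_root q" for c q
    using that code_increment by (cases q) (auto simp: is_root_def parent_def)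
  note bound = card_functions_with_increments_le[where P = nodes and A = "{-1, 0, 1}"
      and C = "code ` LipT s" and is_root = is_root and parent = parent and \<mu> = \<mu>]
  show "finite (code ` LipT s)"
    by (rule bound(1)) (use finite_nodes parent outside roots increments in auto)
  have "card (code ` LipT s) \<le> card {-1::int, 0, 1} ^ card nodes"
    by (rule bound(2)) (use finite_nodes parent outside roots increments in auto)
  then show "card (code ` LipT s) \<le> 3 ^ card nodes" by (simp add: numeral_3_eq_3)
qed

lemma far_points_close:
  assumes f: "f \<in> LipT s" and g: "g \<in> LipT s" and x: "x \<in> Rs s" and far: "2 ^ M \<le> enorm s x"
  shows "\<bar>f x - g x\<bar> \<le> \<epsilon> * (enorm s x powr (1 + \<delta>) + 1)"
proof -
  define e where "e = enorm s x"
  have "(0::real) < 2 ^ M" by simp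
  then have "0 < e" using far unfolding e_def by linarith
  have "2 / \<epsilon> \<le> e powr \<delta>"
    using depth_lower powr_mono2[of \<delta> "2 ^ M" e] far delta_pos unfolding e_def by simp
  then have "2 \<le> \<epsilon> * e powr \<delta>" using eps_pos by (simp add: divide_le_eq mult.commute)
  then have "2 * e \<le> \<epsilon> * e powr \<delta> * e" using \<open>0 < e\<close> by (simp add: mult_right_mono)
  also have "\<dots> = \<epsilon> * e powr (1 + \<delta>)" using \<open>0 < e\<close> by (simp add: powr_add)
  finally have "2 * e \<le> \<epsilon> * e powr (1 + \<delta>)" .
  moreover have "\<bar>f x - g x\<bar> \<le> 2 * e"
    using LipT_abs_le_enorm[OF f x] LipT_abs_le_enorm[OF g x] unfolding e_def by linarith
  ultimately show ?thesis using eps_pos unfolding e_def by (simp add: distrib_left)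
qed

lemma exists_nearby_node:
  assumes x: "x \<in> Rs s" and "k \<le> M" and near: "enorm s x \<le> 2 ^ k"
  obtains i where "(k, i) \<in> nodes" "enorm s (\<lambda>j. x j - node_point k i j) \<le> sqrt (real s) * mesh k / 2"
proof
  define i where "i = restrict (\<lambda>j. round (x j / mesh k)) {..<s}"
  have "round (x j / mesh k) \<in> {- radius k..radius k}" if "j < s" for j
  proof -
    have "\<bar>x j\<bar> \<le> 2 ^ k" using abs_coordinate_le_enorm[OF that, of x] near by linarith
    then have "\<bar>x j / mesh k\<bar> \<le> 2 ^ k / mesh k"
      using mesh_pos[of k] by (simp add: abs_divide divide_right_mono)
    also have "\<dots> \<le> of_int (radius k)" unfolding radius_def by (rule le_of_int_ceiling)
    finally have "of_int (- radius k) \<le> x j / mesh k" "x j / mesh k \<le> of_int (radius k)" by linarith+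
    then show ?thesis by (metis atLeastAtMost_iff round_mono round_of_int)
  qed
  then show "(k, i) \<in> nodes" using \<open>k \<le> M\<close> by (simp add: nodes_def grid_def i_def)
  have "\<bar>x j - node_point k i j\<bar> \<le> mesh k / 2" if "j < s" for j
  proof -
    have "x j - node_point k i j = mesh k * (x j / mesh k - of_int (round (x j / mesh k)))"
      using that mesh_pos[of k] by (simp add: node_point_def i_def right_diff_distrib)
    also have "\<bar>\<dots>\<bar> \<le> mesh k * (1 / 2)"
      using mesh_pos[of k] of_int_round_abs_le[of "x j / mesh k"]
      by (simp add: abs_mult abs_minus_commute mult_left_mono)
    finally show ?thesis by simp
  qed
  then show "enorm s (\<lambda>j. x j - node_point k i j) \<le> sqrt (real s) * mesh k / 2"
    using enorm_le_sqrt_dim_mult[of s _ "mesh k / 2"] mesh_pos[of k] by simp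
qed

lemma near_points_close:
  assumes f: "f \<in> LipT s" and g: "g \<in> LipT s" and "code f = code g"
    and x: "x \<in> Rs s" and "k \<le> M" and "enorm s x \<le> 2 ^ k"
  shows "\<bar>f x - g x\<bar> \<le> \<epsilon> * (2 ^ k) powr (1 + \<delta>) / 4"
proof -
  obtain i where node: "(k, i) \<in> nodes"
    and dist: "enorm s (\<lambda>j. x j - node_point k i j) \<le> sqrt (real s) * mesh k / 2"
    using exists_nearby_node[OF x \<open>k \<le> M\<close> \<open>enorm s x \<le> 2 ^ k\<close>] .
  let ?p = "node_point k i"
  have "\<lfloor>f ?p / mesh k\<rfloor> = \<lfloor>g ?p / mesh k\<rfloor>"
    using fun_cong[OF \<open>code f = code g\<close>, of "(k, i)"] node by (simp add: code_def)
  then have "\<bar>f ?p - g ?p\<bar> < mesh k" by (rule dist_less_if_floor_divide_eq[OF mesh_pos])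
  moreover have "\<bar>f x - f ?p\<bar> \<le> sqrt (real s) * mesh k / 2"
    using LipT_dist_le[OF f x node_point_in_Rs[of k i]] dist by linarith
  moreover have "\<bar>g x - g ?p\<bar> \<le> sqrt (real s) * mesh k / 2"
    using LipT_dist_le[OF g x node_point_in_Rs[of k i]] dist by linarith
  ultimately have "\<bar>f x - g x\<bar> \<le> sqrt (real s) * mesh k + mesh k" by linarith
  also have "\<dots> \<le> 2 * sqrt (real s) * mesh k"
    using dim_pos mesh_pos[of k] by (simp add: mult_right_mono)
  also have "\<dots> = \<epsilon> * (2 ^ k) powr (1 + \<delta>) / 4"
    using dim_pos by (simp add: mesh_def)
  finally show ?thesis .
qed

lemma code_eq_imp_delta_dist_le:
  assumes f: "f \<in> LipT s" and g: "g \<in> LipT s" and "code f = code g"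
  shows "delta_dist s \<delta> f g \<le> \<epsilon>"
proof (rule delta_dist_le)
  fix x assume x: "x \<in> Rs s"
  define e where "e = enorm s x"
  show "\<bar>f x - g x\<bar> \<le> \<epsilon> * (enorm s x powr (1 + \<delta>) + 1)"
  proof (cases "2 ^ M \<le> e")
    case True
    then show ?thesis using far_points_close[OF f g x] unfolding e_def by blast
  next
    case False
    obtain k where "k \<le> M" "e \<le> 2 ^ k" "2 ^ k \<le> max 1 (2 * e)"
      using exists_dyadic_scale[of e M] False enorm_nonneg unfolding e_def by force
    have "\<bar>f x - g x\<bar> \<le> \<epsilon> * (2 ^ k) powr (1 + \<delta>) / 4"
      using near_points_close[OF f g \<open>code f = code g\<close> x \<open>k \<le> M\<close>] \<open>e \<le> 2 ^ k\<close>
      unfolding e_def by blast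
    also have "\<dots> \<le> \<epsilon> * max 1 (2 * e) powr (1 + \<delta>) / 4"
      using \<open>2 ^ k \<le> max 1 (2 * e)\<close> eps_pos delta_pos
      by (simp add: powr_mono2 divide_right_mono mult_left_mono)
    also have "\<dots> \<le> \<epsilon> * (e powr (1 + \<delta>) + 1)"
      using max_one_double_powr_le[of e \<delta>] enorm_nonneg delta_pos delta_le_1 eps_pos
      unfolding e_def by (simp add: mult_left_mono)
    finally show ?thesis unfolding e_def .
  qed
qed

lemma card_grid_le:
  assumes "k \<le> M"
  shows "real (card (grid k)) \<le> (40 * sqrt (real s) / \<epsilon>) ^ s * inverse (2 powr \<delta>) ^ k"
proof -
  define t where "t = (2 powr \<delta>) ^ k"
  have pow: "(2 ^ n) powr \<delta> = (2 powr \<delta>) ^ n" for n :: nat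
    by (simp add: powr_realpow[symmetric] powr_powr powr_power mult.commute)
  have "1 \<le> 2 powr \<delta>" using delta_pos by (simp add: ge_one_powr_ge_zero)
  then have "1 \<le> t" using \<open>k \<le> M\<close> by (simp add: t_def one_le_power)
  have "t \<le> (2 powr \<delta>) ^ M"
    using \<open>1 \<le> 2 powr \<delta>\<close> \<open>k \<le> M\<close> by (simp add: t_def power_increasing)
  also have "\<dots> \<le> 4 / \<epsilon>" using depth_upper pow[of M] by simp
  also have "\<dots> \<le> 8 * sqrt (real s) / \<epsilon>"
    using one_le_sqrt_dim eps_pos by (intro divide_right_mono) linarith+
  finally have "\<epsilon> * t \<le> 8 * sqrt (real s)" using eps_pos by (simp add: field_simps)
  define y where "y = 8 * sqrt (real s) / (\<epsilon> * t)"
  have "1 \<le> y" using \<open>\<epsilon> * t \<le> 8 * sqrt (real s)\<close> \<open>1 \<le> t\<close> eps_pos by (simp add: y_def)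
  have "(2 ^ k) powr (1 + \<delta>) = 2 ^ k * t" by (simp add: powr_add pow t_def)
  then have "mesh k = 2 ^ k * (\<epsilon> * t / (8 * sqrt (real s)))" by (simp add: mesh_def)
  then have "2 ^ k / mesh k = y" by (simp add: y_def)
  then have "radius k = \<lceil>y\<rceil>" by (simp add: radius_def)
  then have "0 \<le> radius k" "of_int (radius k) \<le> y + 1"
    using \<open>1 \<le> y\<close> of_int_ceiling_le_add_one[of y] by simp_all
  have "real (card (grid k)) = (2 * of_int (radius k) + 1) ^ s"
    using \<open>0 \<le> radius k\<close> by (simp add: grid_def card_funcsetE)
  also have "\<dots> \<le> (5 * y) ^ s"
    using \<open>0 \<le> radius k\<close> \<open>of_int (radius k) \<le> y + 1\<close> \<open>1 \<le> y\<close> by (intro power_mono) auto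
  also have "\<dots> = (40 * sqrt (real s) / \<epsilon>) ^ s * inverse t ^ s"
  proof -
    have "5 * y = 40 * sqrt (real s) / \<epsilon> * inverse t" by (simp add: y_def divide_inverse)
    then show ?thesis by (simp only: power_mult_distrib)
  qed
  also have "\<dots> \<le> (40 * sqrt (real s) / \<epsilon>) ^ s * inverse t ^ 1"
    using \<open>1 \<le> t\<close> dim_pos eps_pos by (intro mult_left_mono power_decreasing) (auto simp: inverse_le_1_iff)
  finally show ?thesis by (simp add: t_def power_inverse)
qed

lemma card_nodes_le: "real (card nodes) \<le> (40 * sqrt (real s) / \<epsilon>) ^ s * (4 / \<delta>)"
proof -
  have "card nodes = (\<Sum>k\<le>M. card (grid k))"
    unfolding nodes_def grid_def by (intro card_SigmaI) (auto intro: finite_PiE)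
  then have "real (card nodes) = (\<Sum>k\<le>M. real (card (grid k)))" by simp
  also have "\<dots> \<le> (\<Sum>k\<le>M. (40 * sqrt (real s) / \<epsilon>) ^ s * inverse (2 powr \<delta>) ^ k)"
    by (intro sum_mono card_grid_le) simp
  also have "\<dots> = (40 * sqrt (real s) / \<epsilon>) ^ s * (\<Sum>k\<le>M. inverse (2 powr \<delta>) ^ k)"
    by (simp add: sum_distrib_left)
  also have "\<dots> \<le> (40 * sqrt (real s) / \<epsilon>) ^ s * (4 / \<delta>)"
    using sum_powers_inverse_two_powr_le[OF delta_pos delta_le_1] eps_pos
    by (intro mult_left_mono) auto
  finally show ?thesis .
qed

lemma covering_number_le_three_pow_card_nodes:
  "covering_number (LipT s) (delta_dist s \<delta>) \<epsilon> \<le> enat (3 ^ card nodes)"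
proof -
  have "covering_number (LipT s) (delta_dist s \<delta>) \<epsilon> \<le> enat (card (code ` LipT s))"
    using finite_codes code_eq_imp_delta_dist_le by (rule covering_number_le_card_image)
  also have "\<dots> \<le> enat (3 ^ card nodes)" using card_codes_le by simp
  finally show ?thesis .
qed

end

lemma ln_covering_number_LipT_le_if_eps_less_1:
  fixes \<epsilon> \<delta> :: real
  assumes "0 < s" "0 < \<epsilon>" "\<epsilon> < 1" "0 < \<delta>" "\<delta> \<le> 1"
  shows "covering_number (LipT s) (delta_dist s \<delta>) \<epsilon> \<noteq> \<infinity>"
    and "ln (real (the_enat (covering_number (LipT s) (delta_dist s \<delta>) \<epsilon>)))
           \<le> (400 * sqrt (real s) / \<epsilon>) ^ s * (1 / \<delta>)"
proof -
  obtain M where "dyadic_net s \<epsilon> \<delta> M"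
    using exists_depth[OF assms(2-5)] assms by (metis dyadic_net.intro)
  then interpret dyadic_net s \<epsilon> \<delta> M .
  let ?N = "covering_number (LipT s) (delta_dist s \<delta>) \<epsilon>"
  note bound = ln_the_enat_le[OF covering_number_le_three_pow_card_nodes]
  show "?N \<noteq> \<infinity>" by (rule bound(1)) simp
  have "ln (real (the_enat ?N)) \<le> ln (real (3 ^ card nodes))" by (rule bound(2)) simp
  also have "\<dots> = real (card nodes) * ln 3" by (simp add: ln_realpow)
  also have "\<dots> \<le> (40 * sqrt (real s) / \<epsilon>) ^ s * (4 / \<delta>) * 2"
    using card_nodes_le ln_le_minus_one[of 3] by (intro mult_mono) auto
  also have "\<dots> = (40 * sqrt (real s) / \<epsilon>) ^ s * (1 / \<delta>) * 8" by simp
  also have "\<dots> \<le> (40 * sqrt (real s) / \<epsilon>) ^ s * (1 / \<delta>) * 10 ^ s"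
    using assms(1,2,4) power_increasing[of 1 s "10::real"] by (intro mult_left_mono) auto
  also have "\<dots> = (400 * sqrt (real s) / \<epsilon>) ^ s * (1 / \<delta>)"
    by (simp add: power_mult_distrib[symmetric])
  finally show "ln (real (the_enat ?N)) \<le> (400 * sqrt (real s) / \<epsilon>) ^ s * (1 / \<delta>)" .
qed

lemma ln_covering_number_LipT_le:
  fixes \<epsilon> \<delta> :: real
  assumes "0 < \<epsilon>" "0 < \<delta>" "\<delta> \<le> 1"
  shows "covering_number (LipT s) (delta_dist s \<delta>) \<epsilon> \<noteq> \<infinity>"
    and "ln (real (the_enat (covering_number (LipT s) (delta_dist s \<delta>) \<epsilon>)))
           \<le> (400 * sqrt (real s) / \<epsilon>) ^ s * (1 / \<delta>)"
proof -
  let ?N = "covering_number (LipT s) (delta_dist s \<delta>) \<epsilon>"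
  have "?N \<noteq> \<infinity> \<and> ln (real (the_enat ?N)) \<le> (400 * sqrt (real s) / \<epsilon>) ^ s * (1 / \<delta>)"
  proof (cases "1 \<le> \<epsilon> \<or> s = 0")
    case True
    with assms have "?N \<le> enat 1" by (intro covering_number_LipT_le_one) auto
    moreover have "0 \<le> (400 * sqrt (real s) / \<epsilon>) ^ s * (1 / \<delta>)" using assms by simp
    ultimately show ?thesis using ln_the_enat_le[of ?N 1] by simp
  next
    case False
    with assms show ?thesis using ln_covering_number_LipT_le_if_eps_less_1[of s \<epsilon> \<delta>] by simp
  qed
  then show "?N \<noteq> \<infinity>" "ln (real (the_enat ?N)) \<le> (400 * sqrt (real s) / \<epsilon>) ^ s * (1 / \<delta>)"
    by auto
qed

theorem lemma2p4:
  shows "\<exists>C::real. C \<ge> 1 \<and> (\<forall>(s::nat) (\<epsilon>::real) (\<delta>::real). \<epsilon> > 0 \<and> 0 < \<delta> \<and> \<delta> \<le> 1 \<longrightarrow>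
     covering_number (LipT s) (delta_dist s \<delta>) \<epsilon> \<noteq> \<infinity> \<and>
     ln (real (the_enat (covering_number (LipT s) (delta_dist s \<delta>) \<epsilon>)))
       \<le> (C * sqrt (real s) / \<epsilon>) ^ s * (1 / \<delta>))"
  by (intro exI[of _ 400] conjI allI impI) (use ln_covering_number_LipT_le in auto)

end
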